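(* Let $(R,\mathfrak{m})$ be an Artinian local ring with $|R/\mathfrak{m}|=q<\infty$ such that $R$ has only finitely many ideals. Then $|\mathfrak{m}^i|\le q^{|\mathbb{I}(\mathfrak{m}^i)|}$ for every $i\ge 1$, and $|R|\le q^{|\mathbb{I}(R)|}$.
   Context: All rings are commutative with $1\neq 0$. For an ideal $J$ of $R$, $\mathbb{I}(J)$ denotes the set of all ideals $I$ of $R$ with $I\subseteq J$. *)

theory Defs
  imports "HOL-Algebra.Ideal_Product" "HOL-Algebra.QuotRing"
begin

definition artinian_ring :: "('a, 'b) ring_scheme \<Rightarrow> bool" where
  "artinian_ring R \<longleftrightarrow> ring R \<and>
     (\<forall>I :: nat \<Rightarrow> 'a set. (\<forall>n. ideal (I n) R) \<and> (\<forall>n. I (Suc n) \<subseteq> I n)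
        \<longrightarrow> (\<exists>N. \<forall>n\<ge>N. I n = I N))"

definition local_ring_with :: "('a, 'b) ring_scheme \<Rightarrow> 'a set \<Rightarrow> bool" where
  "local_ring_with R m \<longleftrightarrow> cring R \<and> maximalideal m R \<and>
     (\<forall>J. maximalideal J R \<longrightarrow> J = m)"

definition ideals_below :: "('a, 'b) ring_scheme \<Rightarrow> 'a set \<Rightarrow> 'a set set" where
  "ideals_below R J = {I. ideal I R \<and> I \<subseteq> J}"

text \<open>Power of an ideal, via the product of ideals (I^0 = R).\<close>
definition ideal_pow :: "('a, 'b) ring_scheme \<Rightarrow> 'a set \<Rightarrow> nat \<Rightarrow> 'a set" where
  "ideal_pow R I n = I [^]\<^bsub>ideals_set R\<^esub> n"

end

theory Submission
  imports Defs
begin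

(* The bound |I| <= q ^ |ideals below I| is proved for EVERY ideal I by induction on the
   number of ideals below I; the theorem is the special case I = m^i, resp. I = R.

   Induction step: since there are finitely many ideals, a nonzero ideal I covers some ideal
   J (J is maximal among the ideals strictly inside I).  For x in I - J we get I = J + Rx,
   and in a local ring m x is contained in J: otherwise I = J + R(hx) for some h in m, which
   makes (1 - s h) x lie in J for some s, and 1 - s h is invertible.  Hence every element of I
   has the form j + t x with j in J and t from a set of representatives of R/m, so
   |I| <= q |J|, and J has strictly fewer ideals below it than I. *)

definition ideal_cover :: "('a, 'b) ring_scheme \<Rightarrow> 'a set \<Rightarrow> 'a set \<Rightarrow> bool" where
  "ideal_cover R J I \<longleftrightarrow> ideal J R \<and> ideal I R \<and> J \<subset> I \<and>
     (\<forall>L. ideal L R \<longrightarrow> J \<subseteq> L \<longrightarrow> L \<subseteq> I \<longrightarrow> L = J \<or> L = I)"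

lemma ideal_coverD:
  assumes "ideal_cover R J I"
  shows "ideal J R" and "ideal I R" and "J \<subset> I"
    and "\<And>L. ideal L R \<Longrightarrow> J \<subseteq> L \<Longrightarrow> L \<subseteq> I \<Longrightarrow> L = J \<or> L = I"
  using assms by (auto simp: ideal_cover_def)

context cring
begin

lemma maximalideal_above:
  assumes fin: "finite {I. ideal I R}" and K: "ideal K R" and K_proper: "K \<noteq> carrier R"
  shows "\<exists>M. maximalideal M R \<and> K \<subseteq> M"
proof -
  let ?S = "{J. ideal J R \<and> K \<subseteq> J \<and> J \<noteq> carrier R}"
  have "finite ?S" by (rule finite_subset[OF _ fin]) auto
  moreover have "?S \<noteq> {}" using K K_proper by auto
  ultimately obtain M where M: "M \<in> ?S" and M_max: "\<forall>J\<in>?S. M \<subseteq> J \<longrightarrow> M = J"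
    by (rule finite_has_maximal[THEN bexE])
  have "maximalideal M R"
  proof (rule maximalidealI)
    show "ideal M R" and "carrier R \<noteq> M" using M by auto
    fix J assume "ideal J R" "M \<subseteq> J" "J \<subseteq> carrier R"
    then show "J = M \<or> J = carrier R" using M_max M by blast
  qed
  then show ?thesis using M by auto
qed

lemma local_one_minus_invertible:
  assumes max_m: "maximalideal m R" and unique_m: "\<forall>J. maximalideal J R \<longrightarrow> J = m"
    and fin: "finite {I. ideal I R}" and a: "a \<in> m"
  shows "\<exists>v\<in>carrier R. v \<otimes> (\<one> \<ominus> a) = \<one>"
proof -
  interpret m: maximalideal m R by (rule max_m)
  have a_carr: "a \<in> carrier R" using a m.a_subset by blast
  define u where "u = \<one> \<ominus> a"
  have u_carr: "u \<in> carrier R" unfolding u_def using a_carr by simp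
  have "u \<notin> m"
  proof
    assume "u \<in> m"
    then have "u \<oplus> a \<in> m" using a by (rule m.a_closed)
    moreover have "u \<oplus> a = \<one>" unfolding u_def using a_carr by algebra
    ultimately show False using m.I_notcarr m.one_imp_carrier by simp
  qed
  then have "PIdl u = carrier R"
    using maximalideal_above[OF fin cgenideal_ideal[OF u_carr]] unique_m cgenideal_self[OF u_carr]
    by blast
  then obtain v where "v \<in> carrier R" and "\<one> = v \<otimes> u"
    using one_closed unfolding cgenideal_def by blast
  then show ?thesis unfolding u_def by metis
qed

lemma mem_set_add_PIdl:
  "y \<in> J <+>\<^bsub>R\<^esub> PIdl x \<longleftrightarrow> (\<exists>j\<in>J. \<exists>r\<in>carrier R. y = j \<oplus> r \<otimes> x)"
  unfolding set_add_def set_mult_def cgenideal_def by auto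

lemma cover_generated:
  assumes cover: "ideal_cover R J I" and z: "z \<in> I" "z \<notin> J"
  shows "J <+>\<^bsub>R\<^esub> PIdl z = I"
proof -
  interpret I: ideal I R using ideal_coverD[OF cover] by simp
  interpret J: ideal J R using ideal_coverD[OF cover] by simp
  have z_carr: "z \<in> carrier R" using z I.a_subset by blast
  let ?L = "J <+>\<^bsub>R\<^esub> PIdl z"
  have "ideal ?L R" by (rule add_ideals[OF J.is_ideal cgenideal_ideal[OF z_carr]])
  moreover have "J \<subseteq> ?L"
  proof
    fix j assume "j \<in> J"
    moreover have "j = j \<oplus> \<zero> \<otimes> z" using \<open>j \<in> J\<close> J.a_subset z_carr by auto
    ultimately show "j \<in> ?L" unfolding mem_set_add_PIdl by blast
  qed
  moreover have "?L \<subseteq> I"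
  proof
    fix y assume "y \<in> ?L"
    then obtain j r where "j \<in> J" and "r \<in> carrier R" and "y = j \<oplus> r \<otimes> z"
      unfolding mem_set_add_PIdl by blast
    moreover have "J \<subseteq> I" using ideal_coverD(3)[OF cover] by blast
    ultimately show "y \<in> I" using z(1) by (blast intro: I.I_l_closed)
  qed
  moreover have "z \<in> ?L"
    unfolding mem_set_add_PIdl using z_carr J.zero_closed by (intro bexI[of _ \<zero>] bexI[of _ \<one>]) auto
  ultimately show ?thesis using ideal_coverD(4)[OF cover] z(2) by blast
qed

lemma exists_covered_ideal:
  assumes fin: "finite {I. ideal I R}" and I: "ideal I R" and I_nonzero: "I \<noteq> {\<zero>}"
  shows "\<exists>J. ideal_cover R J I"
proof -
  let ?S = "{J. ideal J R \<and> J \<subset> I}"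
  have "finite ?S" by (rule finite_subset[OF _ fin]) auto
  moreover have "{\<zero>} \<in> ?S"
    using zeroideal I I_nonzero additive_subgroup.zero_closed[OF ideal.axioms(1)[OF I]] by auto
  then have "?S \<noteq> {}" by blast
  ultimately obtain J where J: "J \<in> ?S" and J_max: "\<forall>L\<in>?S. J \<subseteq> L \<longrightarrow> J = L"
    by (rule finite_has_maximal[THEN bexE])
  have "ideal_cover R J I" unfolding ideal_cover_def using J J_max I by auto
  then show ?thesis ..
qed

lemma local_cover_absorbs:
  assumes max_m: "maximalideal m R" and unique_m: "\<forall>J. maximalideal J R \<longrightarrow> J = m"
    and fin: "finite {I. ideal I R}"
    and cover: "ideal_cover R J I" and x: "x \<in> I" and h: "h \<in> m"
  shows "h \<otimes> x \<in> J"
proof (rule ccontr)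
  assume hx_notin: "h \<otimes> x \<notin> J"
  interpret I: ideal I R using ideal_coverD[OF cover] by simp
  interpret J: ideal J R using ideal_coverD[OF cover] by simp
  have x_carr: "x \<in> carrier R" using x I.a_subset by blast
  have h_carr: "h \<in> carrier R" using h max_m by (meson ideal.Icarr maximalideal.axioms(1))
  have x_notin: "x \<notin> J" using hx_notin J.I_l_closed h_carr by blast
  have "h \<otimes> x \<in> I" using I.I_l_closed[OF x h_carr] .
  then have "x \<in> J <+>\<^bsub>R\<^esub> PIdl (h \<otimes> x)" using cover_generated[OF cover _ hx_notin] x by simp
  then obtain j s where j: "j \<in> J" and s: "s \<in> carrier R" and x_eq: "x = j \<oplus> s \<otimes> (h \<otimes> x)"
    unfolding mem_set_add_PIdl by blast
  have j_carr: "j \<in> carrier R" using j J.a_subset by blast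
  have sh: "s \<otimes> h \<in> m" using h s max_m by (meson ideal.I_l_closed maximalideal.axioms(1))
  obtain v where v: "v \<in> carrier R" and v_inv: "v \<otimes> (\<one> \<ominus> s \<otimes> h) = \<one>"
    using local_one_minus_invertible[OF max_m unique_m fin sh] by blast
  have "(\<one> \<ominus> s \<otimes> h) \<otimes> x = x \<ominus> s \<otimes> (h \<otimes> x)" using s h_carr x_carr by algebra
  also have "\<dots> = j" by (subst (1) x_eq) (use j_carr s h_carr x_carr in algebra)
  finally have "x = v \<otimes> j"
    using v_inv v s h_carr x_carr by (metis l_one m_assoc minus_closed one_closed m_closed)
  then have "x \<in> J" using J.I_l_closed[OF j v] by simp
  with x_notin show False ..
qed

lemma residue_representatives:
  assumes m: "ideal m R" and fin_quot: "finite (carrier (R Quot m))"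
  shows "\<exists>T. finite T \<and> card T \<le> card (carrier (R Quot m)) \<and>
           (\<forall>r\<in>carrier R. \<exists>t\<in>T. \<exists>h\<in>m. t = h \<oplus> r)"
proof (intro exI conjI ballI)
  let ?T = "(\<lambda>C. SOME r. r \<in> C) ` carrier (R Quot m)"
  show "finite ?T" using fin_quot by simp
  show "card ?T \<le> card (carrier (R Quot m))" using card_image_le fin_quot by blast
  fix r assume r: "r \<in> carrier R"
  have m_carr: "m \<subseteq> carrier R" using m by (simp add: ideal.axioms(1) additive_subgroup.a_subset)
  have coset: "m +> r \<in> carrier (R Quot m)" using a_rcosetsI[OF m_carr r] by (simp add: FactRing_def)
  have "r \<in> m +> r"
    unfolding a_r_coset_def' using r additive_subgroup.zero_closed[OF ideal.axioms(1)[OF m]]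
    by (intro UN_I[of \<zero>]) auto
  then have "(SOME t. t \<in> m +> r) \<in> m +> r" by (rule someI)
  then show "\<exists>t\<in>?T. \<exists>h\<in>m. t = h \<oplus> r" using coset unfolding a_r_coset_def' by blast
qed

lemma quotient_card_pos:
  assumes m: "ideal m R" and fin_quot: "finite (carrier (R Quot m))"
  shows "card (carrier (R Quot m)) > 0"
proof -
  have m_carr: "m \<subseteq> carrier R" using m by (simp add: ideal.axioms(1) additive_subgroup.a_subset)
  have "m +> \<zero> \<in> carrier (R Quot m)" using a_rcosetsI[OF m_carr] by (simp add: FactRing_def)
  then show ?thesis using fin_quot by (auto simp: card_gt_0_iff)
qed

lemma local_cover_card:
  assumes max_m: "maximalideal m R" and unique_m: "\<forall>J. maximalideal J R \<longrightarrow> J = m"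
    and fin: "finite {I. ideal I R}" and fin_quot: "finite (carrier (R Quot m))"
    and cover: "ideal_cover R J I" and fin_J: "finite J"
  shows "finite I \<and> card I \<le> card J * card (carrier (R Quot m))"
proof -
  interpret I: ideal I R using ideal_coverD[OF cover] by simp
  interpret J: ideal J R using ideal_coverD[OF cover] by simp
  obtain x where x: "x \<in> I" "x \<notin> J" using ideal_coverD(3)[OF cover] by blast
  have x_carr: "x \<in> carrier R" using x I.a_subset by blast
  from residue_representatives[OF maximalideal.axioms(1)[OF max_m] fin_quot]
  obtain T where fin_T: "finite T" and card_T: "card T \<le> card (carrier (R Quot m))"
    and rep: "\<forall>r\<in>carrier R. \<exists>t\<in>T. \<exists>h\<in>m. t = h \<oplus> r" by blast
  let ?f = "\<lambda>(j, t). j \<oplus> t \<otimes> x"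
  have I_sub: "I \<subseteq> ?f ` (J \<times> T)"
  proof
    fix y assume "y \<in> I"
    then have "y \<in> J <+>\<^bsub>R\<^esub> PIdl x" using cover_generated[OF cover x] by simp
    then obtain j r where j: "j \<in> J" and r: "r \<in> carrier R" and y: "y = j \<oplus> r \<otimes> x"
      unfolding mem_set_add_PIdl by blast
    obtain t h where t: "t \<in> T" and h: "h \<in> m" and t_eq: "t = h \<oplus> r" using rep r by blast
    have h_carr: "h \<in> carrier R" using h max_m by (meson ideal.Icarr maximalideal.axioms(1))
    have j_carr: "j \<in> carrier R" using j J.a_subset by blast
    have hx: "h \<otimes> x \<in> J" by (rule local_cover_absorbs[OF max_m unique_m fin cover x(1) h])
    have "j \<ominus> h \<otimes> x \<in> J" unfolding minus_eq using j hx by (intro J.a_closed J.a_inv_closed)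
    moreover have "y = (j \<ominus> h \<otimes> x) \<oplus> t \<otimes> x"
      unfolding y t_eq using j_carr h_carr r x_carr by algebra
    ultimately show "y \<in> ?f ` (J \<times> T)"
      using t by (intro image_eqI[where x = "(j \<ominus> h \<otimes> x, t)"]) auto
  qed
  have fin_image: "finite (?f ` (J \<times> T))" using fin_J fin_T by simp
  have "card I \<le> card (?f ` (J \<times> T))" by (rule card_mono[OF fin_image I_sub])
  also have "\<dots> \<le> card (J \<times> T)" by (rule card_image_le) (use fin_J fin_T in simp)
  also have "\<dots> \<le> card J * card (carrier (R Quot m))"
    using card_T by (simp add: card_cartesian_product)
  finally show ?thesis using finite_subset[OF I_sub fin_image] by simp
qed

lemma local_ideal_card_bound:
  assumes max_m: "maximalideal m R" and unique_m: "\<forall>J. maximalideal J R \<longrightarrow> J = m"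
    and fin: "finite {I. ideal I R}" and fin_quot: "finite (carrier (R Quot m))"
    and I: "ideal I R"
  shows "finite I \<and> card I \<le> card (carrier (R Quot m)) ^ card (ideals_below R I)"
  using I
proof (induction "card (ideals_below R I)" arbitrary: I rule: less_induct)
  case less
  let ?q = "card (carrier (R Quot m))"
  have q_pos: "?q \<ge> 1"
    using quotient_card_pos[OF maximalideal.axioms(1)[OF max_m] fin_quot] by simp
  show ?case
  proof (cases "I = {\<zero>}")
    case True
    then show ?thesis using one_le_power[OF q_pos] by simp
  next
    case False
    then obtain J where cover: "ideal_cover R J I"
      using exists_covered_ideal[OF fin less.prems] by blast
    have fewer: "ideals_below R J \<subset> ideals_below R I"
    proof
      show "ideals_below R J \<subseteq> ideals_below R I"
        using ideal_coverD(3)[OF cover] by (auto simp: ideals_below_def)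
      have "I \<in> ideals_below R I - ideals_below R J"
        using less.prems ideal_coverD(3)[OF cover] by (auto simp: ideals_below_def)
      then show "ideals_below R J \<noteq> ideals_below R I" by blast
    qed
    have "finite (ideals_below R I)" by (rule finite_subset[OF _ fin]) (auto simp: ideals_below_def)
    then have lt: "card (ideals_below R J) < card (ideals_below R I)"
      using fewer by (rule psubset_card_mono)
    have "ideal J R" using ideal_coverD[OF cover] by simp
    with less.hyps[OF lt] have fin_J: "finite J" and card_J: "card J \<le> ?q ^ card (ideals_below R J)"
      by auto
    note step = local_cover_card[OF max_m unique_m fin fin_quot cover fin_J]
    have "card I \<le> card J * ?q" using step by simp
    also have "\<dots> \<le> ?q ^ card (ideals_below R J) * ?q" using card_J by (rule mult_le_mono1)
    also have "\<dots> = ?q ^ Suc (card (ideals_below R J))" by simp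
    also have "\<dots> \<le> ?q ^ card (ideals_below R I)" using q_pos lt by (intro power_increasing) auto
    finally show ?thesis using step by simp
  qed
qed

end

lemma ideal_pow_ideal:
  assumes "cring R" and "ideal I R"
  shows "ideal (ideal_pow R I n) R"
proof -
  interpret cring R by fact
  have "monoid (ideals_set R)" using ideals_set_is_comm_monoid comm_monoid.axioms(1) by blast
  moreover have "I \<in> carrier (ideals_set R)" using assms(2) by (simp add: ideals_set_def)
  ultimately have "I [^]\<^bsub>ideals_set R\<^esub> n \<in> carrier (ideals_set R)" by (rule monoid.nat_pow_closed)
  then show ?thesis by (simp add: ideals_set_def ideal_pow_def)
qed

theorem lemma2p9:
  fixes R (structure) and m :: "'a set" and q :: nat
  assumes "cring R" and "\<one>\<^bsub>R\<^esub> \<noteq> \<zero>\<^bsub>R\<^esub>"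
    and "artinian_ring R"
    and "local_ring_with R m"
    and "finite (carrier (R Quot m))" and "card (carrier (R Quot m)) = q"
    and "finite {I. ideal I R}"
  shows "(\<forall>i::nat. i \<ge> 1 \<longrightarrow> finite (ideal_pow R m i) \<and>
            card (ideal_pow R m i) \<le> q ^ card (ideals_below R (ideal_pow R m i)))
         \<and> finite (carrier R) \<and> card (carrier R) \<le> q ^ card (ideals_below R (carrier R))"
proof -
  interpret cring R by fact
  have max_m: "maximalideal m R" and unique_m: "\<forall>J. maximalideal J R \<longrightarrow> J = m"
    using assms(4) by (auto simp: local_ring_with_def)
  note bound = local_ideal_card_bound[OF max_m unique_m assms(7) assms(5), unfolded assms(6)]
  have "ideal (ideal_pow R m i) R" for i
    using ideal_pow_ideal[OF assms(1) maximalideal.axioms(1)[OF max_m]] .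
  then show ?thesis using bound bound[OF oneideal] by blast
qed

end
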